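(* Let $(\vec S,\le,{}^* )$ be a separation system, let $\mathcal F\subseteq 2^{\vec S}$ be a set of stars, and let $(T,\alpha)$ be an irredundant $S$-tree over $\mathcal F$. Let $e,f$ be distinct edges of $T$ with orientations $\vec e<\overleftarrow f$ (in the natural partial ordering of $\vec E(T)$) such that $\alpha(\vec e)=\alpha(\vec f)=:\vec r$. Then $\vec r$ is trivial in $\vec S$. In particular, $T$ cannot have two distinct leaves both associated with the same star $\{\overleftarrow r\}$ unless $\vec r$ is trivial, or $T$ has only one edge $e$ and $\alpha(\vec e)=\alpha(\overleftarrow e)$ is degenerate.
   Context: A separation system $(\vec S,\le,{}^* )$ is a partially ordered set $\vec S$ together with an involution ${}^*$ that is order-reversing, i.e. $\vec r\le\vec s\iff \vec r^{\,*}\ge\vec s^{\,*}$. For $\vec s\in\vec S$ we write $\overleftarrow s:=\vec s^{\,*}$. A separation is a set $s=\{\vec s,\overleftarrow s\}$; $S$ denotes the set of all separations; $s$ and $\vec s$ are degenerate if $\vec s=\overleftarrow s$. An element $\vec r\in\vec S$ is trivial in $\vec S$ if there is $s\in S$ with $\vec r<\vec s$ and $\vec r<\overleftarrow s$. A star is a nonempty set $\sigma\subseteq\vec S$ such that $\vec r\le\overleftarrow s$ for all distinct $\vec r,\vec s\in\sigma$. An $S$-tree is a pair $(T,\alpha)$ where $T$ is a finite tree with at least one edge and $\alpha:\vec E(T)\to\vec S$, with $\vec E(T)=\{(x,y):\{x,y\}\in E(T)\}$, satisfies $\alpha(y,x)=\alpha(x,y)^*$ for every edge $xy$. For a node $t$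 let $\vec F_t=\{(x,t):xt\in E(T)\}$; $\alpha(\vec F_t)$ is said to be associated with $t$. The $S$-tree is over $\mathcal F\subseteq 2^{\vec S}$ if $\alpha(\vec F_t)\in\mathcal F$ for every node $t$. It is redundant if some node $t$ has distinct neighbours $t',t''$ with $\alpha(t',t)=\alpha(t'',t)$, and irredundant otherwise. The natural partial ordering on $\vec E(T)$ is defined by $(x,y)<(u,v)$ if $\{x,y\}\neq\{u,v\}$ and the unique path in $T$ that meets $\{x,y\}$ only in its first vertex and $\{u,v\}$ only in its last vertex starts at $y$ and ends at $u$. For an edge $e=xy$, $\vec e$ and $\overleftarrow e$ denote its two orientations $(x,y),(y,x)$. *)

theory Defs
  imports Main
begin

definition sep_system :: "'a set \<Rightarrow> ('a \<Rightarrow> 'a \<Rightarrow> bool) \<Rightarrow> ('a \<Rightarrow> 'a) \<Rightarrow> bool" where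
  "sep_system SS le invol \<longleftrightarrow>
     (\<forall>r\<in>SS. le r r) \<and>
     (\<forall>r\<in>SS. \<forall>s\<in>SS. le r s \<and> le s r \<longrightarrow> r = s) \<and>
     (\<forall>r\<in>SS. \<forall>s\<in>SS. \<forall>t\<in>SS. le r s \<and> le s t \<longrightarrow> le r t) \<and>
     (\<forall>r\<in>SS. invol r \<in> SS \<and> invol (invol r) = r) \<and>
     (\<forall>r\<in>SS. \<forall>s\<in>SS. le r s \<longleftrightarrow> le (invol s) (invol r))"

definition sep_less :: "('a \<Rightarrow> 'a \<Rightarrow> bool) \<Rightarrow> 'a \<Rightarrow> 'a \<Rightarrow> bool" where
  "sep_less le r s \<longleftrightarrow> le r s \<and> r \<noteq> s"

definition trivial_sep :: "'a set \<Rightarrow> ('a \<Rightarrow> 'a \<Rightarrow> bool) \<Rightarrow> ('a \<Rightarrow> 'a) \<Rightarrow> 'a \<Rightarrow> bool" where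
  "trivial_sep SS le invol r \<longleftrightarrow> (\<exists>s\<in>SS. sep_less le r s \<and> sep_less le r (invol s))"

definition is_star :: "'a set \<Rightarrow> ('a \<Rightarrow> 'a \<Rightarrow> bool) \<Rightarrow> ('a \<Rightarrow> 'a) \<Rightarrow> 'a set \<Rightarrow> bool" where
  "is_star SS le invol \<sigma> \<longleftrightarrow> \<sigma> \<noteq> {} \<and> \<sigma> \<subseteq> SS \<and>
     (\<forall>r\<in>\<sigma>. \<forall>s\<in>\<sigma>. r \<noteq> s \<longrightarrow> le r (invol s))"

definition is_path :: "'v set \<Rightarrow> 'v set set \<Rightarrow> 'v list \<Rightarrow> bool" where
  "is_path V E P \<longleftrightarrow> P \<noteq> [] \<and> distinct P \<and> set P \<subseteq> V \<and>
     (\<forall>i. Suc i < length P \<longrightarrow> {P ! i, P ! Suc i} \<in> E)"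

definition is_tree :: "'v set \<Rightarrow> 'v set set \<Rightarrow> bool" where
  "is_tree V E \<longleftrightarrow> finite V \<and> V \<noteq> {} \<and>
     (\<forall>e\<in>E. \<exists>x y. e = {x, y} \<and> x \<noteq> y \<and> x \<in> V \<and> y \<in> V) \<and>
     (\<forall>x\<in>V. \<forall>y\<in>V. \<exists>P. is_path V E P \<and> hd P = x \<and> last P = y) \<and>
     \<not> (\<exists>C. length C \<ge> 3 \<and> is_path V E C \<and> {last C, hd C} \<in> E)"

definition oriented_edges :: "'v set set \<Rightarrow> ('v \<times> 'v) set" where
  "oriented_edges E = {(x, y). {x, y} \<in> E}"

definition F_at :: "'v set set \<Rightarrow> 'v \<Rightarrow> ('v \<times> 'v) set" where
  "F_at E t = {(x, t) | x. {x, t} \<in> E}"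

definition is_leaf :: "'v set set \<Rightarrow> 'v \<Rightarrow> bool" where
  "is_leaf E t \<longleftrightarrow> card {x. {x, t} \<in> E} = 1"

definition edge_less :: "'v set \<Rightarrow> 'v set set \<Rightarrow> 'v \<times> 'v \<Rightarrow> 'v \<times> 'v \<Rightarrow> bool" where
  "edge_less V E xy uv \<longleftrightarrow> (case xy of (x, y) \<Rightarrow> case uv of (u, v) \<Rightarrow>
     {x, y} \<noteq> {u, v} \<and>
     (\<exists>P. is_path V E P \<and> hd P = y \<and> last P = u \<and>
          set P \<inter> {x, y} = {y} \<and> set P \<inter> {u, v} = {u}))"

definition S_tree :: "'a set \<Rightarrow> ('a \<Rightarrow> 'a) \<Rightarrow> 'v set \<Rightarrow> 'v set set \<Rightarrow> ('v \<times> 'v \<Rightarrow> 'a) \<Rightarrow> bool" where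
  "S_tree SS invol V E \<alpha> \<longleftrightarrow> is_tree V E \<and> E \<noteq> {} \<and>
     (\<forall>(x, y)\<in>oriented_edges E. \<alpha> (x, y) \<in> SS \<and> \<alpha> (y, x) = invol (\<alpha> (x, y)))"

definition S_tree_over :: "'v set \<Rightarrow> 'v set set \<Rightarrow> ('v \<times> 'v \<Rightarrow> 'a) \<Rightarrow> 'a set set \<Rightarrow> bool" where
  "S_tree_over V E \<alpha> \<F> \<longleftrightarrow> (\<forall>t\<in>V. \<alpha> ` F_at E t \<in> \<F>)"

definition irredundant :: "'v set \<Rightarrow> 'v set set \<Rightarrow> ('v \<times> 'v \<Rightarrow> 'a) \<Rightarrow> bool" where
  "irredundant V E \<alpha> \<longleftrightarrow> (\<forall>t\<in>V. \<forall>t' t''. t' \<noteq> t'' \<and> {t', t} \<in> E \<and> {t'', t} \<in> E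
       \<longrightarrow> \<alpha> (t', t) \<noteq> \<alpha> (t'', t))"

end

theory Submission
  imports Defs
begin

text \<open>
  In an irredundant S-tree over stars, walking along a path of the tree
  never decreases the separations: if a, b, c are consecutive vertices with a \<noteq> c,
  then the star at b contains the distinct elements alpha(a,b) and alpha(c,b), hence
  alpha(a,b) \<le> alpha(c,b)* = alpha(b,c), and moreover alpha(a,b) \<noteq> alpha(b,c)*.
  If e < f* and alpha(e) = alpha(f) = r, the walk from e through the path to f
  therefore yields a chain r = t_0 \<le> t_1 \<le> ... \<le> t_k = r* without consecutive
  "reversals".  Such a chain must contain an element s strictly between r and r*
  that differs from r and r*, and then r < s and r < s*, i.e. r is trivial.

  The statement
  about leaves is reduced to the first part: two leaves with the same star {r*} give
  edges e, f with e < f* and alpha(e) = alpha(f) = r, unless the tree is one edge.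
\<close>

section \<open>Separation systems\<close>

lemma sep_system_props:
  assumes "sep_system SS le invol"
  shows sep_refl: "r \<in> SS \<Longrightarrow> le r r"
    and sep_trans: "\<lbrakk>r \<in> SS; s \<in> SS; t \<in> SS; le r s; le s t\<rbrakk> \<Longrightarrow> le r t"
    and invol_in: "r \<in> SS \<Longrightarrow> invol r \<in> SS"
    and invol_invol: "r \<in> SS \<Longrightarrow> invol (invol r) = r"
    and le_invol_iff: "\<lbrakk>r \<in> SS; s \<in> SS\<rbrakk> \<Longrightarrow> le r s \<longleftrightarrow> le (invol s) (invol r)"
  using assms unfolding sep_system_def by blast+

text \<open>A separation r is trivial as soon as some s lies between r and r* and is
  different from both: then r < s and, reversing s \<le> r*, also r < s*.\<close>
lemma between_trivial:
  assumes sys: "sep_system SS le invol" and rS: "r \<in> SS" and sS: "s \<in> SS"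
    and below: "le r s" and above: "le s (invol r)"
    and ne_r: "s \<noteq> r" and ne_rstar: "s \<noteq> invol r"
  shows "trivial_sep SS le invol r"
proof -
  have "le r (invol s)"
    using above le_invol_iff[OF sys sS invol_in[OF sys rS]] invol_invol[OF sys rS] by simp
  moreover have "r \<noteq> invol s" using ne_rstar invol_invol[OF sys sS] by auto
  ultimately show ?thesis
    using sS below ne_r unfolding trivial_sep_def sep_less_def by auto
qed

lemma chain_mono:
  assumes sys: "sep_system SS le invol"
    and inS: "\<forall>i<n. t i \<in> SS" and step: "\<forall>i. Suc i < n \<longrightarrow> le (t i) (t (Suc i))"
    and "j < n" and "i \<le> j"
  shows "le (t i) (t j)"
  using assms(4,5)
proof (induction j)
  case 0
  then show ?case using sep_refl[OF sys] inS by auto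
next
  case (Suc j)
  show ?case
  proof (cases "i = Suc j")
    case True
    then show ?thesis using sep_refl[OF sys] inS Suc.prems by auto
  next
    case False
    then have "le (t i) (t j)" using Suc by auto
    moreover have "le (t j) (t (Suc j))" using step Suc.prems by blast
    moreover have "t i \<in> SS" "t j \<in> SS" "t (Suc j) \<in> SS" using inS False Suc.prems by auto
    ultimately show ?thesis using sep_trans[OF sys] by blast
  qed
qed

lemma chain_trivial:
  assumes sys: "sep_system SS le invol"
    and n: "n \<ge> 2" and inS: "\<forall>i<n. t i \<in> SS"
    and step: "\<forall>i. Suc i < n \<longrightarrow> le (t i) (t (Suc i)) \<and> t i \<noteq> invol (t (Suc i))"
    and first: "t 0 = r" and last: "t (n - 1) = invol r"
  shows "trivial_sep SS le invol r"
proof -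
  have rS: "r \<in> SS" using inS first n by force
  have "\<exists>i<n. t i \<noteq> r \<and> t i \<noteq> invol r"
  proof (rule ccontr)
    assume "\<not> ?thesis"
    then have two_valued: "\<forall>i<n. t i = r \<or> t i = invol r" by auto
    \<comment> \<open>A step from r to r* is a reversal, so the sequence never leaves r.\<close>
    have all_r: "i < n \<Longrightarrow> t i = r" for i
    proof (induction i)
      case 0
      then show ?case using first by simp
    next
      case (Suc i)
      then have "t i = r" and "t i \<noteq> invol (t (Suc i))" using step by auto
      then show ?case using two_valued Suc.prems invol_invol[OF sys rS] by metis
    qed
    then have "t 0 = r" "t 1 = r" "t (n - 1) = r" using n by auto
    moreover have "t 0 \<noteq> invol (t 1)" using step n by auto
    ultimately show False using last by simp
  qed
  then obtain i where i: "i < n" "t i \<noteq> r" "t i \<noteq> invol r" by blast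
  have "le r (t i)" using chain_mono[OF sys inS, of i 0] step i first by simp
  moreover have "le (t i) (invol r)"
    using chain_mono[OF sys inS, of "n - 1" i] step i last n by simp
  ultimately show ?thesis using between_trivial[OF sys rS] inS i by blast
qed

section \<open>Walks in S-trees\<close>

lemma edge_facts:
  assumes tree: "S_tree SS invol V E \<alpha>" and e: "{a, b} \<in> E"
  shows "a \<noteq> b" "a \<in> V" "b \<in> V" "{b, a} \<in> E"
    "\<alpha> (a, b) \<in> SS" "\<alpha> (b, a) = invol (\<alpha> (a, b))"
proof -
  from tree have "is_tree V E" unfolding S_tree_def by blast
  then obtain x y where "{a, b} = {x, y}" "x \<noteq> y" "x \<in> V" "y \<in> V"
    using e unfolding is_tree_def by blast
  then show "a \<noteq> b" "a \<in> V" "b \<in> V" by (auto simp: doubleton_eq_iff)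
  show "{b, a} \<in> E" using e by (simp add: insert_commute)
  have "(a, b) \<in> oriented_edges E" using e by (simp add: oriented_edges_def)
  then show "\<alpha> (a, b) \<in> SS" "\<alpha> (b, a) = invol (\<alpha> (a, b))"
    using tree unfolding S_tree_def by auto
qed

text \<open>The local step at a node b between distinct neighbours a and c: both
  alpha(a,b) and alpha(c,b) lie in the star at b and differ by irredundancy.\<close>
lemma star_step:
  assumes sys: "sep_system SS le invol"
    and stars: "\<forall>\<sigma>\<in>\<F>. is_star SS le invol \<sigma>"
    and tree: "S_tree SS invol V E \<alpha>"
    and over: "S_tree_over V E \<alpha> \<F>"
    and irr: "irredundant V E \<alpha>"
    and ab: "{a, b} \<in> E" and bc: "{b, c} \<in> E" and ac: "a \<noteq> c"
  shows "le (\<alpha> (a, b)) (\<alpha> (b, c)) \<and> \<alpha> (a, b) \<noteq> invol (\<alpha> (b, c))"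
proof -
  have bV: "b \<in> V" using edge_facts[OF tree ab] by simp
  have cb: "{c, b} \<in> E" using bc by (simp add: insert_commute)
  have star: "is_star SS le invol (\<alpha> ` F_at E b)"
    using over stars bV unfolding S_tree_over_def by blast
  have "\<alpha> (a, b) \<in> \<alpha> ` F_at E b" "\<alpha> (c, b) \<in> \<alpha> ` F_at E b"
    using ab cb by (auto simp: F_at_def)
  moreover have distinct: "\<alpha> (a, b) \<noteq> \<alpha> (c, b)"
    using irr bV ab cb ac unfolding irredundant_def by blast
  ultimately have "le (\<alpha> (a, b)) (invol (\<alpha> (c, b)))" using star unfolding is_star_def by blast
  moreover have "\<alpha> (c, b) = invol (\<alpha> (b, c))" using edge_facts[OF tree bc] by simp
  ultimately show ?thesis
    using distinct invol_invol[OF sys edge_facts(5)[OF tree bc]] by simp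
qed

lemma walk_trivial:
  assumes sys: "sep_system SS le invol"
    and stars: "\<forall>\<sigma>\<in>\<F>. is_star SS le invol \<sigma>"
    and tree: "S_tree SS invol V E \<alpha>"
    and over: "S_tree_over V E \<alpha> \<F>"
    and irr: "irredundant V E \<alpha>"
    and len: "length W \<ge> 3"
    and edges: "\<And>i. Suc i < length W \<Longrightarrow> {W ! i, W ! Suc i} \<in> E"
    and no_backtrack: "\<And>i. Suc (Suc i) < length W \<Longrightarrow> W ! i \<noteq> W ! Suc (Suc i)"
    and first: "\<alpha> (W ! 0, W ! 1) = r"
    and last: "\<alpha> (W ! (length W - 2), W ! (length W - 1)) = invol r"
  shows "trivial_sep SS le invol r"
proof (rule chain_trivial[OF sys, where n = "length W - 1" and t = "\<lambda>i. \<alpha> (W ! i, W ! Suc i)"])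
  show "2 \<le> length W - 1" using len by simp
  show "\<forall>i<length W - 1. \<alpha> (W ! i, W ! Suc i) \<in> SS"
    using edges edge_facts(5)[OF tree] by simp
  show "\<forall>i. Suc i < length W - 1 \<longrightarrow> le (\<alpha> (W ! i, W ! Suc i)) (\<alpha> (W ! Suc i, W ! Suc (Suc i)))
          \<and> \<alpha> (W ! i, W ! Suc i) \<noteq> invol (\<alpha> (W ! Suc i, W ! Suc (Suc i)))"
    using star_step[OF sys stars tree over irr] edges no_backtrack by simp
  show "\<alpha> (W ! 0, W ! Suc 0) = r" using first by simp
  have "Suc (length W - 1 - 1) = length W - 1" "length W - 1 - 1 = length W - 2" using len by auto
  then show "\<alpha> (W ! (length W - 1 - 1), W ! Suc (length W - 1 - 1)) = invol r"
    using last by simp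
qed

lemma edge_less_walk:
  assumes tree: "S_tree SS invol V E \<alpha>"
    and xy: "{x, y} \<in> E" and uv: "{u, v} \<in> E" and ne: "{x, y} \<noteq> {u, v}"
    and less: "edge_less V E (x, y) (v, u)"
  obtains W where "length W \<ge> 3" "W ! 0 = x" "W ! 1 = y"
    "W ! (length W - 2) = v" "W ! (length W - 1) = u"
    "\<And>i. Suc i < length W \<Longrightarrow> {W ! i, W ! Suc i} \<in> E"
    "\<And>i. Suc (Suc i) < length W \<Longrightarrow> W ! i \<noteq> W ! Suc (Suc i)"
proof -
  obtain P where P: "is_path V E P" "hd P = y" "last P = v"
    "set P \<inter> {x, y} = {y}" "set P \<inter> {v, u} = {v}"
    using less unfolding edge_less_def by auto
  have Pne: "P \<noteq> []" and Pdist: "distinct P"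
    and Pedge: "\<And>i. Suc i < length P \<Longrightarrow> {P ! i, P ! Suc i} \<in> E"
    using P(1) unfolding is_path_def by auto
  have "x \<noteq> y" "u \<noteq> v" using edge_facts(1)[OF tree xy] edge_facts(1)[OF tree uv] by auto
  then have xP: "x \<notin> set P" and uP: "u \<notin> set P" using P(4,5) by auto
  define W where "W = x # P @ [u]"
  have lenW: "length W = length P + 2" unfolding W_def by simp
  have P_first: "P ! 0 = y" using P(2) Pne by (simp add: hd_conv_nth)
  have P_last: "P ! (length P - 1) = v" using P(3) Pne by (simp add: last_conv_nth)
  have W_first: "W ! 0 = x" and W_last: "W ! Suc (length P) = u"
    unfolding W_def by (simp_all add: nth_append)
  have W_mid: "i < length P \<Longrightarrow> W ! Suc i = P ! i" for i
    unfolding W_def by (simp add: nth_append)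
  show thesis
  proof
    show "length W \<ge> 3" using lenW Pne by (cases P) auto
    show "W ! 0 = x" "W ! 1 = y" using W_first W_mid[of 0] P_first Pne by auto
    show "W ! (length W - 2) = v" "W ! (length W - 1) = u"
      using W_mid[of "length P - 1"] P_last W_last Pne lenW by auto
  next
    fix i assume i: "Suc i < length W"
    consider "i = 0" | "0 < i" "i < length P" | "i = length P" using i lenW by linarith
    then show "{W ! i, W ! Suc i} \<in> E"
    proof cases
      case 1
      then show ?thesis using W_first W_mid[of 0] P_first Pne xy by simp
    next
      case 2
      then have "Suc (i - 1) < length P" "Suc (i - 1) = i" by auto
      then show ?thesis using Pedge[of "i - 1"] W_mid[of "i - 1"] W_mid[of i] by auto
    next
      case 3
      then have "W ! i = v" using W_mid[of "length P - 1"] P_last Pne by (cases P) auto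
      then show ?thesis using 3 W_last uv by (simp add: insert_commute)
    qed
  next
    fix i assume i: "Suc (Suc i) < length W"
    consider "i = 0" "length P = 1" | "i = 0" "length P > 1"
      | "0 < i" "Suc i < length P" | "0 < i" "Suc i = length P"
      using i lenW Pne by (cases P) linarith+
    then show "W ! i \<noteq> W ! Suc (Suc i)"
    proof cases
      case 1
      then have "y = v" using P_first P_last by simp
      then show ?thesis using 1 W_first W_last ne by auto
    next
      case 2
      then show ?thesis using W_first W_mid[of 1] xP by auto
    next
      case 3
      then show ?thesis using W_mid[of "i - 1"] W_mid[of "Suc i"] Pdist
        by (simp add: nth_eq_iff_index_eq)
    next
      case 4
      then have "W ! i \<in> set P" using W_mid[of "i - 1"] by auto
      then show ?thesis using 4 W_last uP by auto
    qed
  qed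
qed

lemma repeated_orientation_trivial:
  assumes sys: "sep_system SS le invol"
    and stars: "\<forall>\<sigma>\<in>\<F>. is_star SS le invol \<sigma>"
    and tree: "S_tree SS invol V E \<alpha>"
    and over: "S_tree_over V E \<alpha> \<F>"
    and irr: "irredundant V E \<alpha>"
    and xy: "{x, y} \<in> E" and uv: "{u, v} \<in> E" and ne: "{x, y} \<noteq> {u, v}"
    and less: "edge_less V E (x, y) (v, u)" and same: "\<alpha> (x, y) = \<alpha> (u, v)"
  shows "trivial_sep SS le invol (\<alpha> (x, y))"
proof -
  obtain W where W: "length W \<ge> 3" "W ! 0 = x" "W ! 1 = y"
    "W ! (length W - 2) = v" "W ! (length W - 1) = u"
    "\<And>i. Suc i < length W \<Longrightarrow> {W ! i, W ! Suc i} \<in> E"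
    "\<And>i. Suc (Suc i) < length W \<Longrightarrow> W ! i \<noteq> W ! Suc (Suc i)"
    using edge_less_walk[OF tree xy uv ne less] by blast
  have "\<alpha> (v, u) = invol (\<alpha> (x, y))" using edge_facts(6)[OF tree uv] same by simp
  then show ?thesis
    using walk_trivial[OF sys stars tree over irr W(1,6,7)] W(2-5) by simp
qed

section \<open>Leaves\<close>

lemma leaf_neighbour:
  assumes "is_leaf E t"
  obtains a where "{a, t} \<in> E" "\<And>z. {z, t} \<in> E \<Longrightarrow> z = a"
proof -
  obtain a where "{z. {z, t} \<in> E} = {a}"
    using assms unfolding is_leaf_def by (auto simp: card_1_singleton_iff)
  then show thesis using that by blast
qed

text \<open>A leaf is not an inner vertex of a path: its two path-neighbours would coincide.\<close>
lemma leaf_not_inner: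
  assumes Q: "is_path V E Q" and nb: "\<And>z. {z, t} \<in> E \<Longrightarrow> z = a"
    and not_first: "t \<noteq> hd Q" and not_last: "t \<noteq> last Q"
  shows "t \<notin> set Q"
proof
  assume "t \<in> set Q"
  then obtain j where j: "j < length Q" "Q ! j = t" by (auto simp: in_set_conv_nth)
  have Qne: "Q \<noteq> []" and Qdist: "distinct Q"
    and Qedge: "\<And>i. Suc i < length Q \<Longrightarrow> {Q ! i, Q ! Suc i} \<in> E"
    using Q unfolding is_path_def by auto
  have "j \<noteq> 0" using j not_first Qne by (metis hd_conv_nth)
  moreover have "j \<noteq> length Q - 1" using j not_last Qne by (auto simp: last_conv_nth)
  ultimately obtain k where k: "j = Suc k" "Suc (Suc k) < length Q" using j by (cases j) auto
  have "Q ! k = a" using Qedge[of k] k j nb by simp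
  moreover have "Q ! Suc (Suc k) = a"
    using Qedge[of "Suc k"] k j nb by (simp add: insert_commute)
  ultimately show False using Qdist k nth_eq_iff_index_eq by fastforce
qed

lemma adjacent_leaves_span:
  assumes T: "is_tree V E" and pV: "p \<in> V" and t1V: "t1 \<in> V"
    and nb1: "\<And>z. {z, t1} \<in> E \<Longrightarrow> z = t2"
    and nb2: "\<And>z. {z, t2} \<in> E \<Longrightarrow> z = t1"
  shows "p = t1 \<or> p = t2"
proof (rule ccontr)
  assume other: "\<not> ?thesis"
  obtain Q where Q: "is_path V E Q" "hd Q = p" "last Q = t1"
    using T pV t1V unfolding is_tree_def by blast
  have Qne: "Q \<noteq> []" and Qdist: "distinct Q"
    and Qedge: "\<And>i. Suc i < length Q \<Longrightarrow> {Q ! i, Q ! Suc i} \<in> E"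
    using Q(1) unfolding is_path_def by auto
  define m where "m = length Q"
  have Q_first: "Q ! 0 = p" using Q Qne by (simp add: hd_conv_nth)
  have Q_last: "Q ! (m - 1) = t1" using Q Qne by (simp add: last_conv_nth m_def)
  have "m \<noteq> 0" "m \<noteq> 1" using Qne m_def Q_first Q_last other by auto
  moreover have "Suc (m - 2) = m - 1" "m - 2 < m" using \<open>m \<noteq> 0\<close> \<open>m \<noteq> 1\<close> by auto
  ultimately have "{Q ! (m - 2), t1} \<in> E" using Qedge[of "m - 2"] Q_last m_def by auto
  then have Q_prev: "Q ! (m - 2) = t2" by (rule nb1)
  then have "m \<ge> 3" using Q_first other \<open>m \<noteq> 0\<close> \<open>m \<noteq> 1\<close> by (cases "m = 2") auto
  moreover have "Suc (m - 3) = m - 2" using \<open>m \<ge> 3\<close> by auto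
  ultimately have "{Q ! (m - 3), t2} \<in> E" using Qedge[of "m - 3"] Q_prev m_def by auto
  then have "Q ! (m - 3) = Q ! (m - 1)" using nb2 Q_last by simp
  then show False using Qdist \<open>m \<ge> 3\<close> m_def by (simp add: nth_eq_iff_index_eq)
qed

lemma leaves_same_star:
  assumes sys: "sep_system SS le invol"
    and stars: "\<forall>\<sigma>\<in>\<F>. is_star SS le invol \<sigma>"
    and tree: "S_tree SS invol V E \<alpha>"
    and over: "S_tree_over V E \<alpha> \<F>"
    and irr: "irredundant V E \<alpha>"
    and rS: "r \<in> SS" and t1V: "t1 \<in> V" and t12: "t1 \<noteq> t2"
    and leaf1: "is_leaf E t1" and leaf2: "is_leaf E t2"
    and star1: "\<alpha> ` F_at E t1 = {invol r}" and star2: "\<alpha> ` F_at E t2 = {invol r}"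
  shows "trivial_sep SS le invol r \<or> (\<exists>x y. E = {{x, y}} \<and> \<alpha> (x, y) = \<alpha> (y, x))"
proof -
  have T: "is_tree V E" using tree unfolding S_tree_def by blast
  obtain a1 where e1: "{a1, t1} \<in> E" and nb1: "\<And>z. {z, t1} \<in> E \<Longrightarrow> z = a1"
    using leaf_neighbour[OF leaf1] by blast
  obtain a2 where e2: "{a2, t2} \<in> E" and nb2: "\<And>z. {z, t2} \<in> E \<Longrightarrow> z = a2"
    using leaf_neighbour[OF leaf2] by blast
  have "F_at E t1 = {(a1, t1)}" "F_at E t2 = {(a2, t2)}"
    using nb1 e1 nb2 e2 unfolding F_at_def by blast+
  then have "\<alpha> (a1, t1) = invol r" "\<alpha> (a2, t2) = invol r" using star1 star2 by auto
  then have r1: "\<alpha> (t1, a1) = r" and r2: "\<alpha> (t2, a2) = r"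
    using edge_facts(6)[OF tree e1] edge_facts(6)[OF tree e2] invol_invol[OF sys rS] by auto
  have e1': "{t1, a1} \<in> E" and e2': "{t2, a2} \<in> E" using e1 e2 by (simp_all add: insert_commute)
  show ?thesis
  proof (cases "{t1, a1} = {a2, t2}")
    case True
    then have a1: "a1 = t2" and a2: "a2 = t1" using t12 by (auto simp: doubleton_eq_iff)
    have "E = {{t1, t2}}"
    proof
      show "E \<subseteq> {{t1, t2}}"
      proof
        fix e assume "e \<in> E"
        then obtain p q where "e = {p, q}" "p \<noteq> q" "p \<in> V" "q \<in> V"
          using T unfolding is_tree_def by blast
        then show "e \<in> {{t1, t2}}"
          using adjacent_leaves_span[OF T _ t1V] nb1 nb2 a1 a2 by blast
      qed
      show "{{t1, t2}} \<subseteq> E" using e1' a1 by simp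
    qed
    moreover have "\<alpha> (t1, t2) = \<alpha> (t2, t1)" using r1 r2 a1 a2 by simp
    ultimately show ?thesis by blast
  next
    case False
    \<comment> \<open>The path from a1 to a2 avoids both leaves, so (t1,a1) < (a2,t2).\<close>
    have t1a2: "t1 \<noteq> a2" using False nb1 e2' by (auto simp: insert_commute)
    have t2a1: "t2 \<noteq> a1" using t1a2 nb2 e1' by auto
    obtain Q where Q: "is_path V E Q" "hd Q = a1" "last Q = a2"
      using T edge_facts(2)[OF tree e1] edge_facts(2)[OF tree e2] unfolding is_tree_def by blast
    have "Q \<noteq> []" using Q(1) unfolding is_path_def by simp
    moreover have "t1 \<notin> set Q" "t2 \<notin> set Q"
      using leaf_not_inner[OF Q(1) nb1] leaf_not_inner[OF Q(1) nb2] Q(2,3) t1a2 t2a1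
        edge_facts(1)[OF tree e1] edge_facts(1)[OF tree e2] by auto
    ultimately have "edge_less V E (t1, a1) (a2, t2)"
      unfolding edge_less_def using False Q by auto
    then show ?thesis
      using repeated_orientation_trivial[OF sys stars tree over irr e1' e2'] False r1 r2
      by (simp add: insert_commute)
  qed
qed

theorem lemma2p3:
  fixes SS :: "'a set" and le :: "'a \<Rightarrow> 'a \<Rightarrow> bool" and invol :: "'a \<Rightarrow> 'a"
    and \<F> :: "'a set set"
    and V :: "'v set" and E :: "'v set set" and \<alpha> :: "'v \<times> 'v \<Rightarrow> 'a"
  assumes sys: "sep_system SS le invol"
    and stars: "\<forall>\<sigma>\<in>\<F>. is_star SS le invol \<sigma>"
    and tree: "S_tree SS invol V E \<alpha>"
    and over: "S_tree_over V E \<alpha> \<F>"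
    and irr: "irredundant V E \<alpha>"
  shows "(\<forall>x y u v. {x, y} \<in> E \<and> {u, v} \<in> E \<and> {x, y} \<noteq> {u, v}
            \<and> edge_less V E (x, y) (v, u) \<and> \<alpha> (x, y) = \<alpha> (u, v)
            \<longrightarrow> trivial_sep SS le invol (\<alpha> (x, y)))
       \<and> (\<forall>r\<in>SS. \<forall>t1\<in>V. \<forall>t2\<in>V. t1 \<noteq> t2 \<and> is_leaf E t1 \<and> is_leaf E t2
            \<and> \<alpha> ` F_at E t1 = {invol r} \<and> \<alpha> ` F_at E t2 = {invol r}
            \<longrightarrow> trivial_sep SS le invol r
                \<or> (\<exists>x y. E = {{x, y}} \<and> \<alpha> (x, y) = \<alpha> (y, x)))"
  using repeated_orientation_trivial[OF sys stars tree over irr]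
    leaves_same_star[OF sys stars tree over irr]
  by blast

end
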